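(* Let ${\bf i}=(i_1,\dots,i_N)$ be a reduced word for $w_0$ and identify $\mathbb Z^N$ with the cellular crystal $B_{\bf i}=B_{i_1}\otimes\cdots\otimes B_{i_N}$ via $(x_1,\dots,x_N)\leftrightarrow(x_1)_{i_1}\otimes\cdots\otimes(x_N)_{i_N}$. Then for every $i\in I$, $x\in\mathbb Z^N$ and $H\in{\mathcal H}_{\bf i}$, $\tilde e_i(x+H)=\tilde e_i(x)+H$ and $\tilde f_i(x+H)=\tilde f_i(x)+H$.
   Context: $\mathfrak g$ simple with index set $I$, simple roots $\alpha_i$, coroots $h_i$, Cartan matrix $a_{ij}=\alpha_j(h_i)$, $w_0$ longest Weyl element of length $N$. Crystal $B_i=\{(x)_i\mid x\in\mathbb Z\}$: ${\rm wt}((x)_i)=x\alpha_i$, $\varepsilon_i((x)_i)=-x$, $\varphi_i((x)_i)=x$, $\tilde e_i(x)_i=(x+1)_i$, $\tilde f_i(x)_i=(x-1)_i$, and for $j\neq i$: $\varepsilon_j=\varphi_j=-\infty$, $\tilde e_j=\tilde f_j=0$. Tensor product of crystals: ${\rm wt}(b_1\otimes b_2)={\rm wt}(b_1)+{\rm wt}(b_2)$, $\varepsilon_i(b_1\otimes b_2)=\max(\varepsilon_i(b_1),\varepsilon_i(b_2)-\langle h_i,{\rm wt}(b_1)\rangle)$, $\varphi_i(b_1\otimes b_2)=\max(\varphi_i(b_2),\varphi_i(b_1)+\langle h_i,{\rm wt}(b_2)\rangle)$, $\tilde e_i(b_1\otimes b_2)=\tilde e_ib_1\otimes b_2$ if $\varphi_i(b_1)\ge\varepsilon_i(b_2)$,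 else $b_1\otimes\tilde e_ib_2$; $\tilde f_i(b_1\otimes b_2)=\tilde f_ib_1\otimes b_2$ if $\varphi_i(b_1)>\varepsilon_i(b_2)$, else $b_1\otimes\tilde f_ib_2$ (multiple tensor products are associative). For $k\in[1,N]$, $k^{(+)}:=\min\{l>k\mid i_l=i_k\}$ when it exists; $\beta_k(x)=x_k+\sum_{k<j<k^{(+)}}a_{i_k,i_j}x_j+x_{k^{(+)}}$; ${\mathcal H}_{\bf i}:=\{x\in\mathbb Z^N\mid\beta_k(x)=0$ for all $k$ with $k^{(+)}\le N\}$. *)

theory Defs
  imports Main "HOL-Library.Extended_Real"
begin

text \<open>Convention: a i j = alpha_j(h_i). The index set I is a finite type 'i.\<close>

definition finite_type_cartan :: "('i::finite \<Rightarrow> 'i \<Rightarrow> int) \<Rightarrow> bool" where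
  "finite_type_cartan a \<longleftrightarrow>
     (\<forall>i. a i i = 2) \<and>
     (\<forall>i j. i \<noteq> j \<longrightarrow> a i j \<le> 0) \<and>
     (\<forall>i j. a i j = 0 \<longleftrightarrow> a j i = 0) \<and>
     (\<exists>d :: 'i \<Rightarrow> real. (\<forall>i. d i > 0) \<and>
        (\<forall>i j. d i * of_int (a i j) = d j * of_int (a j i)) \<and>
        (\<forall>v :: 'i \<Rightarrow> real. v \<noteq> (\<lambda>_. 0) \<longrightarrow>
            (\<Sum>i\<in>UNIV. \<Sum>j\<in>UNIV. v i * d i * of_int (a i j) * v j) > 0)) \<and>
     (\<forall>J :: 'i set. J \<noteq> {} \<and> J \<noteq> UNIV \<longrightarrow> (\<exists>j\<in>J. \<exists>k. k \<notin> J \<and> a j k \<noteq> 0))"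

text \<open>pairing a i c = <h_i, sum_j c_j alpha_j>\<close>
definition pairing :: "('i::finite \<Rightarrow> 'i \<Rightarrow> int) \<Rightarrow> 'i \<Rightarrow> ('i \<Rightarrow> int) \<Rightarrow> int" where
  "pairing a i c = (\<Sum>j\<in>UNIV. a i j * c j)"

definition simple_root :: "'i \<Rightarrow> 'i \<Rightarrow> int" where
  "simple_root i = (\<lambda>j. if j = i then 1 else 0)"

definition sref :: "('i::finite \<Rightarrow> 'i \<Rightarrow> int) \<Rightarrow> 'i \<Rightarrow> ('i \<Rightarrow> int) \<Rightarrow> ('i \<Rightarrow> int)" where
  "sref a i c = (\<lambda>j. c j - (if j = i then pairing a i c else 0))"

text \<open>Action of s_{i_1} ... s_{i_N} (rightmost factor acts first).\<close>
definition word_act :: "('i::finite \<Rightarrow> 'i \<Rightarrow> int) \<Rightarrow> 'i list \<Rightarrow> ('i \<Rightarrow> int) \<Rightarrow> ('i \<Rightarrow> int)" where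
  "word_act a ws = foldr (sref a) ws"

text \<open>ws is a reduced word for the longest element w_0: the element it represents maps every
  simple root (hence every positive root) to a non-positive combination of simple roots
  (this characterises w_0), and no shorter word represents the same Weyl group element.\<close>
definition reduced_word_w0 :: "('i::finite \<Rightarrow> 'i \<Rightarrow> int) \<Rightarrow> 'i list \<Rightarrow> bool" where
  "reduced_word_w0 a ws \<longleftrightarrow>
     (\<forall>j k. word_act a ws (simple_root j) k \<le> 0) \<and>
     (\<forall>ws'. word_act a ws' = word_act a ws \<longrightarrow> length ws \<le> length ws')"

text \<open>Elements: lists xs of integers with length xs = length ws; xs corresponds to
  (x_1)_{i_1} (x) ... (x) (x_N)_{i_N}, bracketed as B_{i_1} (x) (B_{i_2} (x) ( ... )).
  -infinity is the ereal value -\<infinity>; the element 0 is None.\<close>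

fun wtT :: "'i list \<Rightarrow> int list \<Rightarrow> ('i \<Rightarrow> int)" where
  "wtT (w # ws) (x # xs) = (\<lambda>j. (if j = w then x else 0) + wtT ws xs j)"
| "wtT _ _ = (\<lambda>j. 0)"

definition eps1 :: "'i \<Rightarrow> 'i \<Rightarrow> int \<Rightarrow> ereal" where
  "eps1 i w x = (if i = w then ereal (of_int (- x)) else - \<infinity>)"

definition phi1 :: "'i \<Rightarrow> 'i \<Rightarrow> int \<Rightarrow> ereal" where
  "phi1 i w x = (if i = w then ereal (of_int x) else - \<infinity>)"

fun epsT :: "('i::finite \<Rightarrow> 'i \<Rightarrow> int) \<Rightarrow> 'i \<Rightarrow> 'i list \<Rightarrow> int list \<Rightarrow> ereal" where
  "epsT a i [w] [x] = eps1 i w x"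
| "epsT a i (w # ws) (x # xs) =
     max (eps1 i w x) (epsT a i ws xs - ereal (of_int (pairing a i (wtT [w] [x]))))"
| "epsT a i _ _ = - \<infinity>"

fun phiT :: "('i::finite \<Rightarrow> 'i \<Rightarrow> int) \<Rightarrow> 'i \<Rightarrow> 'i list \<Rightarrow> int list \<Rightarrow> ereal" where
  "phiT a i [w] [x] = phi1 i w x"
| "phiT a i (w # ws) (x # xs) =
     max (phiT a i ws xs) (phi1 i w x + ereal (of_int (pairing a i (wtT ws xs))))"
| "phiT a i _ _ = - \<infinity>"

fun eT :: "('i::finite \<Rightarrow> 'i \<Rightarrow> int) \<Rightarrow> 'i \<Rightarrow> 'i list \<Rightarrow> int list \<Rightarrow> int list option" where
  "eT a i [w] [x] = (if i = w then Some [x + 1] else None)"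
| "eT a i (w # ws) (x # xs) =
     (if phi1 i w x \<ge> epsT a i ws xs
      then (if i = w then Some ((x + 1) # xs) else None)
      else map_option (\<lambda>ys. x # ys) (eT a i ws xs))"
| "eT a i _ _ = None"

fun fT :: "('i::finite \<Rightarrow> 'i \<Rightarrow> int) \<Rightarrow> 'i \<Rightarrow> 'i list \<Rightarrow> int list \<Rightarrow> int list option" where
  "fT a i [w] [x] = (if i = w then Some [x - 1] else None)"
| "fT a i (w # ws) (x # xs) =
     (if phi1 i w x > epsT a i ws xs
      then (if i = w then Some ((x - 1) # xs) else None)
      else map_option (\<lambda>ys. x # ys) (fT a i ws xs))"
| "fT a i _ _ = None"

text \<open>0-indexed: for positions k < l < N with ws!l = ws!k and no occurrence of ws!k strictly
  between (i.e. l = k^(+)), beta_k(H) = H_k + sum_{k<j<l} a_{i_k i_j} H_j + H_l = 0.\<close>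
definition Hset :: "('i \<Rightarrow> 'i \<Rightarrow> int) \<Rightarrow> 'i list \<Rightarrow> int list set" where
  "Hset a ws = {H. length H = length ws \<and>
     (\<forall>k l. k < l \<and> l < length ws \<and> ws ! l = ws ! k \<and>
            (\<forall>j. k < j \<and> j < l \<longrightarrow> ws ! j \<noteq> ws ! k) \<longrightarrow>
        H ! k + (\<Sum>j\<in>{k<..<l}. a (ws ! k) (ws ! j) * H ! j) + H ! l = 0)}"

definition vadd :: "int list \<Rightarrow> int list \<Rightarrow> int list" where
  "vadd xs ys = map2 (+) xs ys"

end

theory Submission
  imports Defs
begin

(* By the tensor product rule, e_i and f_i act on the first factor of B_{i_1} (x) B' iff
   phi_i((x_1)_{i_1}) compares suitably with eps_i of the tail x'.  Unfolded, eps_i of the tail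
   is the maximum over the occurrences k of i of the affine terms -x_k - sum_{j<k} a_{i,i_j} x_j.
   Adding H shifts the k-th term by -H_k - sum_{j<k} a_{i,i_j} H_j, and since a_ii = 2 the
   relation beta_k(H) = 0 says exactly that this shift is the same at k and at k^(+).  Hence
   eps_i(x' + H') = eps_i(x') + c for a constant c; if i_1 = i occurs again in the tail then
   c = H_1, so the comparison is unchanged, and induction along the word finishes the proof.
   The word need not be reduced, and of the Cartan matrix only a_ii = 2 is used. *)

fun eps_shift :: "('i::finite \<Rightarrow> 'i \<Rightarrow> int) \<Rightarrow> 'i \<Rightarrow> 'i list \<Rightarrow> int list \<Rightarrow> int" where
  "eps_shift a i (w # ws) (h # hs) = (if w = i then - h else eps_shift a i ws hs - a i w * h)"
| "eps_shift a i _ _ = 0"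

lemma vadd_Cons [simp]: "vadd (x # xs) (h # hs) = (x + h) # vadd xs hs"
  by (simp add: vadd_def)

lemma length_vadd [simp]: "length (vadd xs hs) = min (length xs) (length hs)"
  by (simp add: vadd_def)

lemma greaterThanLessThan_Suc_Suc: "{Suc k<..<Suc l} = Suc ` {k<..<l}"
  by (auto simp: image_iff gr0_conv_Suc Suc_less_eq2)

lemma sum_greaterThanLessThan_Suc_shift:
  "(\<Sum>j\<in>{Suc k<..<Suc l}. f j) = (\<Sum>j\<in>{k<..<l}. f (Suc j))"
  by (simp add: greaterThanLessThan_Suc_Suc sum.reindex)

lemma length_Hset: "H \<in> Hset a ws \<Longrightarrow> length H = length ws"
  by (simp add: Hset_def)

lemma HsetD:
  assumes "H \<in> Hset a ws" "k < l" "l < length ws" "ws ! l = ws ! k"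
    and "\<And>j. k < j \<Longrightarrow> j < l \<Longrightarrow> ws ! j \<noteq> ws ! k"
  shows "H ! k + (\<Sum>j\<in>{k<..<l}. a (ws ! k) (ws ! j) * H ! j) + H ! l = 0"
  using assms unfolding Hset_def by blast

lemma Hset_Cons_tl:
  assumes "h # hs \<in> Hset a (w # ws)"
  shows "hs \<in> Hset a ws"
  unfolding Hset_def
proof safe
  show "length hs = length ws"
    using length_Hset [OF assms] by simp
  fix k l
  assume "k < l" "l < length ws" "ws ! l = ws ! k"
    and "\<forall>j. k < j \<and> j < l \<longrightarrow> ws ! j \<noteq> ws ! k"
  then have "(h # hs) ! Suc k
      + (\<Sum>j\<in>{Suc k<..<Suc l}. a ((w # ws) ! Suc k) ((w # ws) ! j) * (h # hs) ! j)
      + (h # hs) ! Suc l = 0"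
    by (intro HsetD [OF assms]) (auto simp: gr0_conv_Suc less_Suc_eq_0_disj)
  then show "hs ! k + (\<Sum>j\<in>{k<..<l}. a (ws ! k) (ws ! j) * hs ! j) + hs ! l = 0"
    by (simp add: sum_greaterThanLessThan_Suc_shift)
qed

lemma Hset_ConsE:
  assumes "H \<in> Hset a (w # ws)"
  obtains h hs where "H = h # hs" "hs \<in> Hset a ws"
proof (cases H)
  case (Cons h hs)
  with assms show thesis
    by (intro that [of h hs]) (simp_all add: Hset_Cons_tl)
qed (use assms length_Hset in fastforce)

lemma eps_shift_first_occurrence:
  assumes "length hs = length ws" "k < length ws" "ws ! k = i" "\<forall>j<k. ws ! j \<noteq> i"
  shows "eps_shift a i ws hs = - (hs ! k) - (\<Sum>j<k. a i (ws ! j) * hs ! j)"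
  using assms
proof (induction ws arbitrary: hs k)
  case Nil
  then show ?case by simp
next
  case (Cons w ws)
  then obtain h hs' where hs: "hs = h # hs'"
    by (cases hs) auto
  show ?case
  proof (cases k)
    case 0
    with Cons.prems hs show ?thesis by simp
  next
    case (Suc k')
    with Cons.prems have "w \<noteq> i" by auto
    moreover have "eps_shift a i ws hs' = - (hs' ! k') - (\<Sum>j<k'. a i (ws ! j) * hs' ! j)"
      using Cons.prems Suc hs by (intro Cons.IH) auto
    moreover have "(\<Sum>j<Suc k'. a i ((w # ws) ! j) * (h # hs') ! j)
        = a i w * h + (\<Sum>j<k'. a i (ws ! j) * hs' ! j)"
      unfolding sum.lessThan_Suc_shift by simp
    ultimately show ?thesis
      using hs Suc by simp
  qed
qed

lemma eps_shift_eq_head: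
  assumes H: "h # hs \<in> Hset a (i # ws)" and "i \<in> set ws"
  shows "eps_shift a i ws hs = h"
proof -
  define k where "k = (LEAST k. k < length ws \<and> ws ! k = i)"
  have "\<exists>k. k < length ws \<and> ws ! k = i"
    using \<open>i \<in> set ws\<close> by (simp add: in_set_conv_nth)
  then have k: "k < length ws" "ws ! k = i"
    unfolding k_def by (metis (mono_tags, lifting) LeastI_ex)+
  have before: "\<forall>j<k. ws ! j \<noteq> i"
    using k(1) not_less_Least unfolding k_def by fastforce
  have "length hs = length ws"
    using length_Hset [OF H] by simp
  then have shift: "eps_shift a i ws hs = - (hs ! k) - (\<Sum>j<k. a i (ws ! j) * hs ! j)"
    using k before by (rule eps_shift_first_occurrence)
  have "(h # hs) ! 0 + (\<Sum>j\<in>{0<..<Suc k}. a ((i # ws) ! 0) ((i # ws) ! j) * (h # hs) ! j)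
      + (h # hs) ! Suc k = 0"
    using k before by (intro HsetD [OF H]) (auto simp: gr0_conv_Suc)
  moreover have "{0<..<Suc k} = Suc ` {..<k}"
    by (auto simp: image_iff gr0_conv_Suc)
  ultimately show ?thesis
    using shift by (simp add: sum.reindex)
qed

lemma pairing_wtT_single: "pairing a i (wtT [w] [x]) = a i w * x"
proof -
  have "(\<Sum>j\<in>UNIV. a i j * wtT [w] [x] j) = (\<Sum>j\<in>UNIV. if j = w then a i w * x else 0)"
    by (rule sum.cong) auto
  then show ?thesis
    by (simp add: pairing_def)
qed

lemma epsT_Cons:
  "length xs = length ws \<Longrightarrow>
   epsT a i (w # ws) (x # xs) = max (eps1 i w x) (epsT a i ws xs - ereal (of_int (a i w * x)))"
  by (cases ws; cases xs) (simp_all add: pairing_wtT_single del: wtT.simps)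

lemma eT_Cons:
  "length xs = length ws \<Longrightarrow>
   eT a i (w # ws) (x # xs) =
     (if phi1 i w x \<ge> epsT a i ws xs
      then (if i = w then Some ((x + 1) # xs) else None)
      else map_option (\<lambda>ys. x # ys) (eT a i ws xs))"
  by (cases ws; cases xs) auto

lemma fT_Cons:
  "length xs = length ws \<Longrightarrow>
   fT a i (w # ws) (x # xs) =
     (if phi1 i w x > epsT a i ws xs
      then (if i = w then Some ((x - 1) # xs) else None)
      else map_option (\<lambda>ys. x # ys) (fT a i ws xs))"
  by (cases ws; cases xs) (auto simp: phi1_def)

lemma epsT_eq_minf_if_notin:
  "i \<notin> set ws \<Longrightarrow> length xs = length ws \<Longrightarrow> epsT a i ws xs = - \<infinity>"
proof (induction ws arbitrary: xs)
  case Nil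
  then show ?case by simp
next
  case (Cons w ws)
  then show ?case
    by (cases xs) (simp_all add: epsT_Cons eps1_def)
qed

lemma epsT_vadd_Hset:
  assumes "a i i = 2" "H \<in> Hset a ws" "length x = length ws"
  shows "epsT a i ws (vadd x H) = epsT a i ws x + ereal (of_int (eps_shift a i ws H))"
  using assms(2,3)
proof (induction ws arbitrary: x H)
  case Nil
  then show ?case by simp
next
  case (Cons w ws)
  obtain h hs where H: "H = h # hs" and hs: "hs \<in> Hset a ws"
    using Cons.prems(1) by (rule Hset_ConsE)
  obtain x0 xs where x: "x = x0 # xs" and len: "length xs = length ws"
    using Cons.prems(2) by (cases x) auto
  have IH: "epsT a i ws (vadd xs hs) = epsT a i ws xs + ereal (of_int (eps_shift a i ws hs))"
    using Cons.IH [OF hs len] .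
  have lenv: "length (vadd xs hs) = length ws"
    using hs len by (simp add: length_Hset)
  consider "w \<noteq> i" | "w = i" "i \<in> set ws" | "w = i" "i \<notin> set ws"
    by blast
  then show ?case
  proof cases
    case 1
    with x H len lenv IH show ?thesis
      by (cases "epsT a i ws xs") (simp_all add: epsT_Cons eps1_def algebra_simps)
  next
    case 2
    then have "eps_shift a i ws hs = h"
      using Cons.prems(1) H by (simp add: eps_shift_eq_head)
    with 2 x H len lenv IH \<open>a i i = 2\<close> show ?thesis
      by (cases "epsT a i ws xs") (simp_all add: epsT_Cons eps1_def algebra_simps max_def)
  next
    case 3
    with x H len lenv show ?thesis
      by (simp add: epsT_Cons eps1_def epsT_eq_minf_if_notin)
  qed
qed

lemma phi1_epsT_vadd_Hset:
  assumes "a i i = 2" and H: "h # hs \<in> Hset a (w # ws)" and "length xs = length ws"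
  shows "phi1 i w (x + h) \<ge> epsT a i ws (vadd xs hs) \<longleftrightarrow> phi1 i w x \<ge> epsT a i ws xs"
    and "phi1 i w (x + h) > epsT a i ws (vadd xs hs) \<longleftrightarrow> phi1 i w x > epsT a i ws xs"
proof -
  have eps: "epsT a i ws (vadd xs hs) = epsT a i ws xs + ereal (of_int (eps_shift a i ws hs))"
    using epsT_vadd_Hset [OF \<open>a i i = 2\<close> Hset_Cons_tl [OF H] \<open>length xs = length ws\<close>] .
  consider "w \<noteq> i" | "w = i" "i \<in> set ws" | "w = i" "i \<notin> set ws"
    by blast
  then have "(phi1 i w (x + h) \<ge> epsT a i ws (vadd xs hs) \<longleftrightarrow> phi1 i w x \<ge> epsT a i ws xs)
    \<and> (phi1 i w (x + h) > epsT a i ws (vadd xs hs) \<longleftrightarrow> phi1 i w x > epsT a i ws xs)"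
  proof cases
    case 1
    with eps show ?thesis
      by (cases "epsT a i ws xs") (simp_all add: phi1_def)
  next
    case 2
    then have "eps_shift a i ws hs = h"
      using H by (simp add: eps_shift_eq_head)
    with 2 eps show ?thesis
      by (cases "epsT a i ws xs") (simp_all add: phi1_def)
  next
    case 3
    with eps \<open>length xs = length ws\<close> show ?thesis
      by (simp add: phi1_def epsT_eq_minf_if_notin)
  qed
  then show "phi1 i w (x + h) \<ge> epsT a i ws (vadd xs hs) \<longleftrightarrow> phi1 i w x \<ge> epsT a i ws xs"
    and "phi1 i w (x + h) > epsT a i ws (vadd xs hs) \<longleftrightarrow> phi1 i w x > epsT a i ws xs"
    by auto
qed

lemma eT_vadd_Hset:
  assumes "a i i = 2" "H \<in> Hset a ws" "length x = length ws"
  shows "eT a i ws (vadd x H) = map_option (\<lambda>y. vadd y H) (eT a i ws x)"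
  using assms(2,3)
proof (induction ws arbitrary: x H)
  case Nil
  then show ?case by simp
next
  case (Cons w ws)
  obtain h hs where H: "H = h # hs" and hs: "hs \<in> Hset a ws"
    using Cons.prems(1) by (rule Hset_ConsE)
  obtain x0 xs where x: "x = x0 # xs" and len: "length xs = length ws"
    using Cons.prems(2) by (cases x) auto
  have lenv: "length (vadd xs hs) = length ws"
    using hs len by (simp add: length_Hset)
  show ?case
    unfolding x H vadd_Cons eT_Cons [OF len] eT_Cons [OF lenv]
      phi1_epsT_vadd_Hset(1) [OF assms(1) Cons.prems(1) [unfolded H] len] Cons.IH [OF hs len]
    by (cases "eT a i ws xs") (auto simp: algebra_simps)
qed

lemma fT_vadd_Hset:
  assumes "a i i = 2" "H \<in> Hset a ws" "length x = length ws"
  shows "fT a i ws (vadd x H) = map_option (\<lambda>y. vadd y H) (fT a i ws x)"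
  using assms(2,3)
proof (induction ws arbitrary: x H)
  case Nil
  then show ?case by simp
next
  case (Cons w ws)
  obtain h hs where H: "H = h # hs" and hs: "hs \<in> Hset a ws"
    using Cons.prems(1) by (rule Hset_ConsE)
  obtain x0 xs where x: "x = x0 # xs" and len: "length xs = length ws"
    using Cons.prems(2) by (cases x) auto
  have lenv: "length (vadd xs hs) = length ws"
    using hs len by (simp add: length_Hset)
  show ?case
    unfolding x H vadd_Cons fT_Cons [OF len] fT_Cons [OF lenv]
      phi1_epsT_vadd_Hset(2) [OF assms(1) Cons.prems(1) [unfolded H] len] Cons.IH [OF hs len]
    by (cases "fT a i ws xs") (auto simp: algebra_simps)
qed

theorem proposition8p2:
  fixes a :: "'i::finite \<Rightarrow> 'i \<Rightarrow> int" and ws :: "'i list"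
    and i :: 'i and x H :: "int list"
  assumes "finite_type_cartan a"
    and "reduced_word_w0 a ws"
    and "length x = length ws"
    and "H \<in> Hset a ws"
  shows "eT a i ws (vadd x H) = map_option (\<lambda>y. vadd y H) (eT a i ws x)
     \<and> fT a i ws (vadd x H) = map_option (\<lambda>y. vadd y H) (fT a i ws x)"
proof -
  have "a i i = 2"
    using \<open>finite_type_cartan a\<close> by (simp add: finite_type_cartan_def)
  with assms(3,4) show ?thesis
    by (simp add: eT_vadd_Hset fT_vadd_Hset)
qed

end
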